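(* Let $n\ge 6$ and let $K_n$ be a random linear embedding of the complete graph on $n$ vertices in $C^3$. Then the mean sum of squared linking numbers of $K_n$ equals $$\frac{q}{16}\sum_{k=3}^{n-3}\sum_{l=3}^{n-k}\frac{n!}{(n-k-l)!}=\frac{q}{16}\sum_{i=6}^{n}\frac{n!}{(n-i)!}(i-5),$$ where $q$ is the constant defined in the context.
   Context: A random linear embedding of a graph $G$ in $C^3=[0,1]^3$: the vertices are placed at independent uniformly distributed points of $C^3$, and each edge is realized as the straight segment between its endpoints. The mean sum of squared linking numbers of the embedded graph is $E\big[\sum \mathrm{lk}(C,C')^2\big]$, the sum taken over all unordered pairs $\{C,C'\}$ of vertex-disjoint cycles of the graph (each of length $\ge3$). For oriented segments $l,l'$, $\epsilon(l,l')$ denotes the signed crossing in orthogonal projection onto a fixed plane ($0$ if the projections do not cross, else $\pm1$ by the right-hand rule). With $A,B,C,P,Q,R$ independent uniform points in $C^3$ and $X\to Y$ the segment oriented from $X$ to $Y$: $2s=P(\epsilon(A\to B,P\to Q)\ne0)$, $u=E[\epsilon(A\to B,P\to Q)\epsilon(A\to B,Q\to R)]$, $v=E[\epsilon(A\to B,P\to Q)\epsilon(B\to C,Q\to R)]$, and $q=s+2(u+v)>0$. *)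

theory Defs
  imports "HOL-Probability.Probability"
begin

type_synonym point = "real ^ 3"

definition cube3 :: "point set" where
  "cube3 = {x. \<forall>i. 0 \<le> x $ i \<and> x $ i \<le> 1}"

definition unif_cube :: "point measure" where
  "unif_cube = uniform_measure lborel cube3"

definition seg_pt :: "point \<Rightarrow> point \<Rightarrow> real \<Rightarrow> point" where
  "seg_pt X Y s = X + s *\<^sub>R (Y - X)"

definition proj_xy :: "point \<Rightarrow> real \<times> real" where
  "proj_xy x = (x $ 1, x $ 2)"

definition height :: "point \<Rightarrow> real" where
  "height x = x $ 3"

definition cross2 :: "point \<Rightarrow> point \<Rightarrow> real" where
  "cross2 d e = d $ 1 * e $ 2 - d $ 2 * e $ 1"

text \<open>Signed crossing eps(X->Y, P->Q) of two oriented segments in the projection: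
  0 if the projections do not cross (or are parallel, a null event); otherwise the
  crossing sign by the right-hand rule: with over-strand direction a and under-strand
  direction b (projected), the sign is sgn(a1 b2 - a2 b1).  Writing d = Y - X,
  e = Q - P, this equals sgn(height of first strand - height of second) * sgn(cross2 d e).\<close>
definition eps :: "point \<Rightarrow> point \<Rightarrow> point \<Rightarrow> point \<Rightarrow> real" where
  "eps X Y P Q =
     (if cross2 (Y - X) (Q - P) \<noteq> 0 \<and>
         (\<exists>s t. 0 \<le> s \<and> s \<le> 1 \<and> 0 \<le> t \<and> t \<le> 1 \<and>
                proj_xy (seg_pt X Y s) = proj_xy (seg_pt P Q t))
      then (let (s, t) = (THE (s, t). proj_xy (seg_pt X Y s) = proj_xy (seg_pt P Q t))
            in sgn (height (seg_pt X Y s) - height (seg_pt P Q t)) * sgn (cross2 (Y - X) (Q - P)))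
      else 0)"

text \<open>Six independent uniform points A,B,C,P,Q,R = x 0, ..., x 5.\<close>
definition six_pts :: "(nat \<Rightarrow> point) measure" where
  "six_pts = PiM {..<6} (\<lambda>_. unif_cube)"

definition const_s :: real where
  "const_s = measure six_pts {x \<in> space six_pts. eps (x 0) (x 1) (x 3) (x 4) \<noteq> 0} / 2"

definition const_u :: real where
  "const_u = (\<integral>x. eps (x 0) (x 1) (x 3) (x 4) * eps (x 0) (x 1) (x 4) (x 5) \<partial>six_pts)"

definition const_v :: real where
  "const_v = (\<integral>x. eps (x 0) (x 1) (x 3) (x 4) * eps (x 1) (x 2) (x 4) (x 5) \<partial>six_pts)"

definition const_q :: real where
  "const_q = const_s + 2 * (const_u + const_v)"

definition cyc_edges :: "nat list \<Rightarrow> nat set set" where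
  "cyc_edges xs = {{xs ! i, xs ! ((i + 1) mod length xs)} | i. i < length xs}"

definition is_cyc_list :: "nat \<Rightarrow> nat list \<Rightarrow> bool" where
  "is_cyc_list n xs \<longleftrightarrow> distinct xs \<and> 3 \<le> length xs \<and> set xs \<subseteq> {..<n}"

definition cycles :: "nat \<Rightarrow> nat set set set" where
  "cycles n = {cyc_edges xs | xs. is_cyc_list n xs}"

definition cyc_verts :: "nat set set \<Rightarrow> nat set" where
  "cyc_verts C = \<Union>C"

definition lk_list :: "(nat \<Rightarrow> point) \<Rightarrow> nat list \<Rightarrow> nat list \<Rightarrow> real" where
  "lk_list pos xs ys =
     (\<Sum>i<length xs. \<Sum>j<length ys.
        eps (pos (xs ! i)) (pos (xs ! ((i + 1) mod length xs)))
            (pos (ys ! j)) (pos (ys ! ((j + 1) mod length ys)))) / 2"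

text \<open>Linking number of cycles C, C' (edge sets), with an arbitrarily chosen orientation;
  its square does not depend on the orientation.\<close>
definition lk :: "nat \<Rightarrow> (nat \<Rightarrow> point) \<Rightarrow> nat set set \<Rightarrow> nat set set \<Rightarrow> real" where
  "lk n pos C C' =
     lk_list pos (SOME xs. is_cyc_list n xs \<and> cyc_edges xs = C)
                 (SOME ys. is_cyc_list n ys \<and> cyc_edges ys = C')"

definition disj_cycle_pairs :: "nat \<Rightarrow> nat set set set set" where
  "disj_cycle_pairs n = {{C, C'} | C C'. C \<in> cycles n \<and> C' \<in> cycles n \<and>
                                        cyc_verts C \<inter> cyc_verts C' = {}}"

definition sq_lk_pair :: "nat \<Rightarrow> (nat \<Rightarrow> point) \<Rightarrow> nat set set set \<Rightarrow> real" where
  "sq_lk_pair n pos Pr =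
     (let C = (SOME C. C \<in> Pr); C' = (SOME C'. C' \<in> Pr \<and> C' \<noteq> C) in (lk n pos C C')\<^sup>2)"

definition embed_measure :: "nat \<Rightarrow> (nat \<Rightarrow> point) measure" where
  "embed_measure n = PiM {..<n} (\<lambda>_. unif_cube)"

definition mean_sq_lk :: "nat \<Rightarrow> real" where
  "mean_sq_lk n = (\<integral>pos. (\<Sum>Pr\<in>disj_cycle_pairs n. sq_lk_pair n pos Pr) \<partial>embed_measure n)"

end

theory Submission
  imports Defs
begin

text \<open>Writing lk(C, C') as half the sum of the signed crossings eps(e, e') over edges e of C
  and e' of C', the expected square becomes a sum of correlations E[eps(e, e') eps(f, f')].
  Exchanging the labels of the two endpoints of an edge that occurs only once preserves the
  distribution and reverses that edge, so such a correlation vanishes unless f is e or a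
  neighbour of e and f' is e' or a neighbour of e'. The nine remaining terms are 2s, four
  times u and four times v, which add up to 2q, so E[lk(C, C')^2] = |C| |C'| q / 2. Finally
  every pair of disjoint cycles is represented by 8 |C| |C'| ordered pairs of disjoint vertex
  lists, and there are n! / (n - k - l)! such pairs of lists of lengths k and l.\<close>

section \<open>Signed crossings\<close>

lemma cross2_uminus_right: "cross2 d (- e) = - cross2 d e"
  and cross2_commute: "cross2 e d = - cross2 d e"
  by (simp_all add: cross2_def)

lemma proj_xy_seg_pt: "proj_xy (seg_pt X Y s) = (X$1 + s * (Y$1 - X$1), X$2 + s * (Y$2 - X$2))"
  by (simp add: proj_xy_def seg_pt_def)

lemma seg_pt_reverse: "seg_pt Y X (1 - s) = seg_pt X Y s"
  by (simp add: seg_pt_def algebra_simps)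

text \<open>Cramer's rule for the intersection of the two projected lines.\<close>
lemma proj_crossing_params:
  assumes "cross2 (Y - X) (Q - P) \<noteq> 0"
  shows "proj_xy (seg_pt X Y (cross2 (P - X) (Q - P) / cross2 (Y - X) (Q - P)))
       = proj_xy (seg_pt P Q (cross2 (P - X) (Y - X) / cross2 (Y - X) (Q - P)))"
  using assms unfolding proj_xy_seg_pt cross2_def by (simp add: field_simps)

lemma proj_crossing_params_unique:
  assumes D: "cross2 (Y - X) (Q - P) \<noteq> 0"
    and "proj_xy (seg_pt X Y s) = proj_xy (seg_pt P Q t)"
    and "proj_xy (seg_pt X Y s') = proj_xy (seg_pt P Q t')"
  shows "s = s' \<and> t = t'"
proof -
  define d1 d2 e1 e2 where "d1 = Y$1 - X$1" "d2 = Y$2 - X$2" "e1 = Q$1 - P$1" "e2 = Q$2 - P$2"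
  have q1: "(s - s') * d1 = (t - t') * e1" and q2: "(s - s') * d2 = (t - t') * e2"
    using assms(2,3) unfolding proj_xy_seg_pt d1_d2_e1_e2_def by (simp_all add: algebra_simps)
  have "(s - s') * (d1 * e2 - d2 * e1) = ((s - s') * d1) * e2 - ((s - s') * d2) * e1"
    by (simp only: right_diff_distrib mult.assoc)
  also have "\<dots> = ((t - t') * e1) * e2 - ((t - t') * e2) * e1" by (simp only: q1 q2)
  finally have s: "(s - s') * (d1 * e2 - d2 * e1) = 0" by simp
  have "(t - t') * (d1 * e2 - d2 * e1) = ((t - t') * e2) * d1 - ((t - t') * e1) * d2"
    by (simp only: right_diff_distrib mult.assoc mult.commute[of d1 e2] mult.commute[of d2 e1])
  also have "\<dots> = ((s - s') * d2) * d1 - ((s - s') * d1) * d2" by (simp only: q1 q2)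
  finally have t: "(t - t') * (d1 * e2 - d2 * e1) = 0" by simp
  have "d1 * e2 - d2 * e1 \<noteq> 0"
    using D by (simp add: cross2_def d1_d2_e1_e2_def)
  with s t show ?thesis by simp
qed

lemma eps_parallel: "cross2 (Y - X) (Q - P) = 0 \<Longrightarrow> eps X Y P Q = 0"
  by (simp add: eps_def)

lemma eps_at_crossing:
  assumes D: "cross2 (Y - X) (Q - P) \<noteq> 0"
    and st: "proj_xy (seg_pt X Y s) = proj_xy (seg_pt P Q t)"
  shows "eps X Y P Q = (if 0 \<le> s \<and> s \<le> 1 \<and> 0 \<le> t \<and> t \<le> 1
      then sgn (height (seg_pt X Y s) - height (seg_pt P Q t)) * sgn (cross2 (Y - X) (Q - P)) else 0)"
proof -
  have the: "(THE (s, t). proj_xy (seg_pt X Y s) = proj_xy (seg_pt P Q t)) = (s, t)"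
  proof (rule the_equality)
    show "case (s, t) of (s, t) \<Rightarrow> proj_xy (seg_pt X Y s) = proj_xy (seg_pt P Q t)"
      using st by simp
    fix p assume "case p of (s, t) \<Rightarrow> proj_xy (seg_pt X Y s) = proj_xy (seg_pt P Q t)"
    then show "p = (s, t)" using proj_crossing_params_unique[OF D st] by (cases p) simp
  qed
  have ex: "(\<exists>s t. 0 \<le> s \<and> s \<le> 1 \<and> 0 \<le> t \<and> t \<le> 1 \<and>
                proj_xy (seg_pt X Y s) = proj_xy (seg_pt P Q t)) \<longleftrightarrow> (0 \<le> s \<and> s \<le> 1 \<and> 0 \<le> t \<and> t \<le> 1)"
    using st proj_crossing_params_unique[OF D st] by blast
  show ?thesis
    unfolding eps_def Let_def ex the prod.case by (simp only: D simp_thms not_False_eq_True)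
qed

lemma eps_explicit: "eps X Y P Q = (if cross2 (Y - X) (Q - P) \<noteq> 0 \<and>
   0 \<le> cross2 (P - X) (Q - P) / cross2 (Y - X) (Q - P) \<and> cross2 (P - X) (Q - P) / cross2 (Y - X) (Q - P) \<le> 1 \<and>
   0 \<le> cross2 (P - X) (Y - X) / cross2 (Y - X) (Q - P) \<and> cross2 (P - X) (Y - X) / cross2 (Y - X) (Q - P) \<le> 1
  then sgn (height (seg_pt X Y (cross2 (P - X) (Q - P) / cross2 (Y - X) (Q - P))) -
            height (seg_pt P Q (cross2 (P - X) (Y - X) / cross2 (Y - X) (Q - P)))) * sgn (cross2 (Y - X) (Q - P))
  else 0)"
proof (cases "cross2 (Y - X) (Q - P) = 0")
  case True
  then show ?thesis by (simp add: eps_parallel)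
next
  case False
  show ?thesis unfolding eps_at_crossing[OF False proj_crossing_params[OF False]] using False by simp
qed

lemma eps_reverse_right: "eps X Y Q P = - eps X Y P Q"
proof (cases "cross2 (Y - X) (Q - P) = 0")
  case True
  then show ?thesis using cross2_uminus_right[of _ "Q - P"] by (simp add: eps_parallel)
next
  case False
  let ?s = "cross2 (P - X) (Q - P) / cross2 (Y - X) (Q - P)"
  let ?t = "cross2 (P - X) (Y - X) / cross2 (Y - X) (Q - P)"
  have st: "proj_xy (seg_pt X Y ?s) = proj_xy (seg_pt P Q ?t)"
    by (rule proj_crossing_params[OF False])
  then have st': "proj_xy (seg_pt X Y ?s) = proj_xy (seg_pt Q P (1 - ?t))"
    by (simp add: seg_pt_reverse)
  have D': "cross2 (Y - X) (P - Q) = - cross2 (Y - X) (Q - P)"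
    using cross2_uminus_right[of _ "Q - P"] by simp
  have F': "cross2 (Y - X) (P - Q) \<noteq> 0" using False D' by simp
  have c: "(R \<and> 0 \<le> 1 - ?t \<and> 1 - ?t \<le> 1) = (R \<and> 0 \<le> ?t \<and> ?t \<le> 1)" for R
    by linarith
  show ?thesis
    unfolding eps_at_crossing[OF False st] eps_at_crossing[OF F' st'] D' seg_pt_reverse c sgn_minus
    by (simp only: mult_minus_right if_distrib[of uminus] minus_zero)
qed

lemma eps_commute: "eps P Q X Y = eps X Y P Q"
proof (cases "cross2 (Y - X) (Q - P) = 0")
  case True
  then show ?thesis using cross2_commute[of "Q - P"] by (simp add: eps_parallel)
next
  case False
  let ?s = "cross2 (P - X) (Q - P) / cross2 (Y - X) (Q - P)"
  let ?t = "cross2 (P - X) (Y - X) / cross2 (Y - X) (Q - P)"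
  have st: "proj_xy (seg_pt X Y ?s) = proj_xy (seg_pt P Q ?t)"
    by (rule proj_crossing_params[OF False])
  have D': "cross2 (Q - P) (Y - X) = - cross2 (Y - X) (Q - P)"
    using cross2_commute[of "Q - P"] by simp
  have F': "cross2 (Q - P) (Y - X) \<noteq> 0" using False D' by simp
  have sgn: "sgn (a - b) * sgn (- D) = sgn (b - a) * sgn D" for a b D :: real
    by (simp add: sgn_if)
  have c: "(0 \<le> ?t \<and> ?t \<le> 1 \<and> 0 \<le> ?s \<and> ?s \<le> 1) = (0 \<le> ?s \<and> ?s \<le> 1 \<and> 0 \<le> ?t \<and> ?t \<le> 1)"
    by blast
  show ?thesis
    unfolding eps_at_crossing[OF False st] eps_at_crossing[OF F' st[symmetric]] D' c sgn ..
qed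

lemma eps_cases: "eps X Y P Q \<in> {-1, 0, 1}"
proof -
  have "sgn (a::real) * sgn b \<in> {-1, 0, 1}" for a b
    by (simp add: sgn_if)
  then show ?thesis
    unfolding eps_explicit by simp
qed

lemma abs_eps_le_1: "\<bar>eps X Y P Q\<bar> \<le> 1"
  using eps_cases[of X Y P Q] by auto

lemma eps_times_self: "eps X Y P Q * eps X Y P Q = (if eps X Y P Q \<noteq> 0 then 1 else 0)"
  using eps_cases[of X Y P Q] by auto

section \<open>Independent uniform points\<close>

lemma cube3_eq_cbox: "cube3 = cbox (vec 0) (vec 1)"
  unfolding cube3_def interval_cbox_cart[symmetric] by (auto simp: less_eq_vec_def)

lemma cube3_borel[measurable]: "cube3 \<in> sets borel"
  unfolding cube3_eq_cbox by simp

lemma emeasure_cube3: "emeasure lborel cube3 = 1"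
proof -
  have "(vec 1 - vec 0 :: real^3) \<bullet> b = 1" "(vec 0 :: real^3) \<bullet> b \<le> vec 1 \<bullet> b" if "b \<in> Basis" for b
    using that by (auto simp: Basis_vec_def inner_axis)
  then show ?thesis unfolding cube3_eq_cbox emeasure_lborel_cbox_eq by simp
qed

lemma prob_space_unif_cube: "prob_space unif_cube"
  unfolding unif_cube_def by (rule prob_space_uniform_measure) (simp_all add: emeasure_cube3)

lemma sets_unif_cube[simp, measurable_cong]: "sets unif_cube = sets borel"
  unfolding unif_cube_def by simp

lemma space_unif_cube[simp]: "space unif_cube = UNIV"
  unfolding unif_cube_def by simp

lemma prob_space_embed_measure: "prob_space (embed_measure n)"
  unfolding embed_measure_def by (rule prob_space_PiM) (rule prob_space_unif_cube)

lemma integral_PiM_reindex: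
  fixes G :: "('i \<Rightarrow> 'a) \<Rightarrow> real"
  assumes "prob_space M" and "inj_on t J" and "t ` J \<subseteq> K"
    and G: "G \<in> borel_measurable (PiM J (\<lambda>_. M))"
  shows "(\<integral>\<omega>. G (\<lambda>j\<in>J. \<omega> (t j)) \<partial>PiM K (\<lambda>_. M)) = (\<integral>x. G x \<partial>PiM J (\<lambda>_. M))"
proof -
  have distr: "distr (PiM K (\<lambda>_. M)) (PiM J (\<lambda>_. M)) (\<lambda>\<omega>. \<lambda>j\<in>J. \<omega> (t j)) = PiM J (\<lambda>_. M)"
    by (rule distr_PiM_reindex) (use assms in auto)
  have "(\<lambda>\<omega>. \<lambda>j\<in>J. \<omega> (t j)) \<in> PiM K (\<lambda>_. M) \<rightarrow>\<^sub>M PiM J (\<lambda>_. M)"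
    by (rule measurable_restrict) (use assms in auto)
  from integral_distr[OF this G] show ?thesis
    unfolding distr by simp
qed

lemma integral_embed_measure_eq_six_pts:
  fixes G :: "(nat \<Rightarrow> point) \<Rightarrow> real"
  assumes inj: "inj_on t J" and tJ: "t ` J \<subseteq> {..<n}" and J6: "J \<subseteq> {..<6}"
    and G: "G \<in> borel_measurable (PiM J (\<lambda>_. unif_cube))"
    and G_restrict: "\<And>x. G x = G (restrict x J)"
  shows "(\<integral>pos. G (\<lambda>j. pos (t j)) \<partial>embed_measure n) = (\<integral>x. G x \<partial>six_pts)"
proof -
  have "(\<integral>pos. G (\<lambda>j. pos (t j)) \<partial>embed_measure n) = (\<integral>pos. G (\<lambda>j\<in>J. pos (t j)) \<partial>embed_measure n)"
    by (subst G_restrict) (simp add: restrict_def)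
  also have "\<dots> = (\<integral>x. G x \<partial>PiM J (\<lambda>_. unif_cube))"
    unfolding embed_measure_def
    by (rule integral_PiM_reindex[OF prob_space_unif_cube inj tJ G])
  also have "\<dots> = (\<integral>x. G (\<lambda>j\<in>J. x (id j)) \<partial>six_pts)"
    unfolding six_pts_def
    by (rule integral_PiM_reindex[symmetric]) (use J6 G prob_space_unif_cube in auto)
  also have "\<dots> = (\<integral>x. G x \<partial>six_pts)"
    by (subst (2) G_restrict) (simp add: restrict_def)
  finally show ?thesis .
qed

lemma measurable_vec_nth[measurable (raw)]:
  assumes "f \<in> M \<rightarrow>\<^sub>M borel"
  shows "(\<lambda>x. (f x :: real^3) $ i) \<in> borel_measurable M"
proof -
  have "(\<lambda>x::real^3. x $ i) \<in> borel_measurable borel"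
    by (intro borel_measurable_continuous_onI linear_continuous_on bounded_linear_vec_nth)
  from measurable_compose[OF assms this] show ?thesis by simp
qed

lemma measurable_eps[measurable (raw)]:
  assumes [measurable]: "A \<in> M \<rightarrow>\<^sub>M borel" "B \<in> M \<rightarrow>\<^sub>M borel" "C \<in> M \<rightarrow>\<^sub>M borel" "D \<in> M \<rightarrow>\<^sub>M borel"
  shows "(\<lambda>x. eps (A x) (B x) (C x) (D x)) \<in> borel_measurable M"
  unfolding eps_explicit cross2_def height_def seg_pt_def by measurable

lemma measurable_PiM_unif_cube_component[measurable]:
  "j \<in> J \<Longrightarrow> (\<lambda>x. x j) \<in> PiM J (\<lambda>_::nat. unif_cube) \<rightarrow>\<^sub>M borel"
  using measurable_component_singleton[of j J "\<lambda>_. unif_cube"]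
  by (simp add: measurable_cong_sets[OF refl sets_unif_cube])

lemma measurable_embed_measure_component[measurable]:
  "j < n \<Longrightarrow> (\<lambda>x. x j) \<in> embed_measure n \<rightarrow>\<^sub>M borel"
  unfolding embed_measure_def by (rule measurable_PiM_unif_cube_component) simp

lemma integrable_eps_times_eps:
  assumes "a < n" "b < n" "c < n" "d < n" "a' < n" "b' < n" "c' < n" "d' < n"
  shows "integrable (embed_measure n)
    (\<lambda>pos. eps (pos a) (pos b) (pos c) (pos d) * eps (pos a') (pos b') (pos c') (pos d'))"
proof (rule finite_measure.integrable_const_bound[where B=1])
  show "finite_measure (embed_measure n)"
    using prob_space_embed_measure by (rule prob_space.finite_measure)
  have "\<bar>eps A B C D * eps A' B' C' D'\<bar> \<le> 1" for A B C D A' B' C' D'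
    using abs_eps_le_1[of A B C D] abs_eps_le_1[of A' B' C' D'] by (simp add: abs_mult mult_le_one)
  then show "AE pos in embed_measure n.
      norm (eps (pos a) (pos b) (pos c) (pos d) * eps (pos a') (pos b') (pos c') (pos d')) \<le> 1"
    by simp
  show "(\<lambda>pos. eps (pos a) (pos b) (pos c) (pos d) * eps (pos a') (pos b') (pos c') (pos d'))
      \<in> borel_measurable (embed_measure n)"
    using assms by simp
qed

lemma integral_eps_square:
  assumes "a < n" "b < n" "c < n" "d < n" "distinct [a, b, c, d]"
  shows "(\<integral>pos. eps (pos a) (pos b) (pos c) (pos d) * eps (pos a) (pos b) (pos c) (pos d)
           \<partial>embed_measure n) = 2 * const_s"
proof -
  let ?G = "\<lambda>x::nat\<Rightarrow>point. eps (x 0) (x 1) (x 3) (x 4) * eps (x 0) (x 1) (x 3) (x 4)"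
  let ?E = "{x \<in> space six_pts. eps (x 0) (x 1) (x 3) (x 4) \<noteq> 0}"
  have [measurable]: "?G \<in> borel_measurable (PiM {0,1,3,4} (\<lambda>_. unif_cube))"
    by measurable
  have "(\<integral>pos. ?G (\<lambda>m. pos ([a, b, a, c, d, a] ! m)) \<partial>embed_measure n) = (\<integral>x. ?G x \<partial>six_pts)"
    by (rule integral_embed_measure_eq_six_pts[where J="{0,1,3,4}"])
      (use assms in \<open>auto simp: inj_on_def\<close>)
  also have "\<dots> = (\<integral>x. indicator ?E x \<partial>six_pts)"
    by (rule Bochner_Integration.integral_cong) (auto simp: eps_times_self indicator_def)
  also have "\<dots> = 2 * const_s"
    unfolding const_s_def by (simp add: Int_absorb2 subset_iff)
  finally show ?thesis by simp
qed

lemma integral_eps_common_edge: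
  assumes "a < n" "b < n" "p < n" "q < n" "r < n" "distinct [a, b, p, q, r]"
  shows "(\<integral>pos. eps (pos a) (pos b) (pos p) (pos q) * eps (pos a) (pos b) (pos q) (pos r)
           \<partial>embed_measure n) = const_u"
proof -
  let ?G = "\<lambda>x::nat\<Rightarrow>point. eps (x 0) (x 1) (x 3) (x 4) * eps (x 0) (x 1) (x 4) (x 5)"
  have [measurable]: "?G \<in> borel_measurable (PiM {0,1,3,4,5} (\<lambda>_. unif_cube))"
    by measurable
  have "(\<integral>pos. ?G (\<lambda>m. pos ([a, b, a, p, q, r] ! m)) \<partial>embed_measure n) = (\<integral>x. ?G x \<partial>six_pts)"
    by (rule integral_embed_measure_eq_six_pts[where J="{0,1,3,4,5}"])
      (use assms in \<open>auto simp: inj_on_def\<close>)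
  then show ?thesis unfolding const_u_def by simp
qed

lemma integral_eps_adjacent_edges:
  assumes "a < n" "b < n" "c < n" "p < n" "q < n" "r < n" "distinct [a, b, c, p, q, r]"
  shows "(\<integral>pos. eps (pos a) (pos b) (pos p) (pos q) * eps (pos b) (pos c) (pos q) (pos r)
           \<partial>embed_measure n) = const_v"
proof -
  let ?G = "\<lambda>x::nat\<Rightarrow>point. eps (x 0) (x 1) (x 3) (x 4) * eps (x 1) (x 2) (x 4) (x 5)"
  have [measurable]: "?G \<in> borel_measurable (PiM {0,1,2,3,4,5} (\<lambda>_. unif_cube))"
    by measurable
  have "(\<integral>pos. ?G (\<lambda>m. pos ([a, b, c, p, q, r] ! m)) \<partial>embed_measure n) = (\<integral>x. ?G x \<partial>six_pts)"
    by (rule integral_embed_measure_eq_six_pts[where J="{0,1,2,3,4,5}"])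
      (use assms in \<open>auto simp: inj_on_def\<close>)
  then show ?thesis unfolding const_v_def by simp
qed

text \<open>Exchanging the labels c and d preserves the distribution and reverses the edge c d,
  so the expectation equals its own negative.\<close>
lemma integral_eps_lonely_edge:
  assumes "a < n" "b < n" "c < n" "d < n" "a' < n" "b' < n" "c' < n" "d' < n"
    and "c \<noteq> d" "c \<notin> {a, b, a', b', c', d'}" "d \<notin> {a, b, a', b', c', d'}"
  shows "(\<integral>pos. eps (pos a) (pos b) (pos c) (pos d) * eps (pos a') (pos b') (pos c') (pos d')
           \<partial>embed_measure n) = 0"
proof -
  let ?f = "\<lambda>pos::nat\<Rightarrow>point. eps (pos a) (pos b) (pos c) (pos d) * eps (pos a') (pos b') (pos c') (pos d')"
  let ?t = "\<lambda>j::nat. if j = c then d else if j = d then c else j"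
  have [measurable]: "?f \<in> borel_measurable (PiM {..<n} (\<lambda>_. unif_cube))"
    using assms by (intro borel_measurable_times measurable_eps measurable_PiM_unif_cube_component) auto
  have "(\<integral>\<omega>. ?f (\<lambda>j\<in>{..<n}. \<omega> (?t j)) \<partial>PiM {..<n} (\<lambda>_. unif_cube)) = (\<integral>x. ?f x \<partial>PiM {..<n} (\<lambda>_. unif_cube))"
    by (rule integral_PiM_reindex[OF prob_space_unif_cube])
      (use assms in \<open>auto simp: inj_on_def\<close>)
  moreover have "?f (\<lambda>j\<in>{..<n}. \<omega> (?t j)) = - ?f \<omega>" for \<omega>
    using assms eps_reverse_right[of "\<omega> a" "\<omega> b" "\<omega> d" "\<omega> c"] by auto
  ultimately show ?thesis
    unfolding embed_measure_def by simp
qed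

section \<open>Crossing correlations of two disjoint cycles\<close>

definition cyc_succ :: "nat \<Rightarrow> nat \<Rightarrow> nat" where
  "cyc_succ k m = (if Suc m = k then 0 else Suc m)"

definition cyc_pred :: "nat \<Rightarrow> nat \<Rightarrow> nat" where
  "cyc_pred k m = (if m = 0 then k - 1 else m - 1)"

lemma Suc_mod_eq_cyc_succ: "m < k \<Longrightarrow> Suc m mod k = cyc_succ k m"
  unfolding cyc_succ_def by auto

lemma cyc_succ_less: "m < k \<Longrightarrow> cyc_succ k m < k"
  and cyc_pred_less: "m < k \<Longrightarrow> cyc_pred k m < k"
  and cyc_succ_pred: "m < k \<Longrightarrow> cyc_succ k (cyc_pred k m) = m"
  and cyc_pred_succ: "m < k \<Longrightarrow> cyc_pred k (cyc_succ k m) = m"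
  unfolding cyc_succ_def cyc_pred_def by auto

lemma cyc_succ_inj: "m < k \<Longrightarrow> m' < k \<Longrightarrow> cyc_succ k m = cyc_succ k m' \<Longrightarrow> m = m'"
  unfolding cyc_succ_def by (auto split: if_splits)

lemma cyc_succ_eq_imp_pred: "m < k \<Longrightarrow> m' < k \<Longrightarrow> cyc_succ k m' = m \<Longrightarrow> m' = cyc_pred k m"
  unfolding cyc_succ_def cyc_pred_def by (auto split: if_splits)

lemma cyc_neighbours_distinct:
  assumes "3 \<le> k" "m < k"
  shows "cyc_succ k m \<noteq> m" "cyc_pred k m \<noteq> m" "cyc_succ k m \<noteq> cyc_pred k m"
    "cyc_succ k (cyc_succ k m) \<noteq> m" "cyc_succ k (cyc_succ k m) \<noteq> cyc_succ k m"
  using assms unfolding cyc_succ_def cyc_pred_def by auto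

lemmas cyc_neighbours_distinct' = cyc_neighbours_distinct[THEN not_sym]

lemma integral_power2_sum:
  fixes f :: "'i \<Rightarrow> 'a \<Rightarrow> real"
  assumes "finite S" and int: "\<And>i j. i \<in> S \<Longrightarrow> j \<in> S \<Longrightarrow> integrable M (\<lambda>x. f i x * f j x)"
  shows "integrable M (\<lambda>x. (\<Sum>i\<in>S. f i x)\<^sup>2)"
    and "(\<integral>x. (\<Sum>i\<in>S. f i x)\<^sup>2 \<partial>M) = (\<Sum>i\<in>S. \<Sum>j\<in>S. \<integral>x. f i x * f j x \<partial>M)"
proof -
  have sq: "(\<Sum>i\<in>S. f i x)\<^sup>2 = (\<Sum>i\<in>S. \<Sum>j\<in>S. f i x * f j x)" for x
    by (simp add: power2_eq_square sum_product)
  show "integrable M (\<lambda>x. (\<Sum>i\<in>S. f i x)\<^sup>2)"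
    unfolding sq by (intro Bochner_Integration.integrable_sum int)
  show "(\<integral>x. (\<Sum>i\<in>S. f i x)\<^sup>2 \<partial>M) = (\<Sum>i\<in>S. \<Sum>j\<in>S. \<integral>x. f i x * f j x \<partial>M)"
    unfolding sq by (simp add: Bochner_Integration.integral_sum Bochner_Integration.integrable_sum int)
qed

locale disjoint_cyc_lists =
  fixes n :: nat and xs ys :: "nat list"
  assumes xs: "is_cyc_list n xs" and ys: "is_cyc_list n ys" and disjoint: "set xs \<inter> set ys = {}"
begin

abbreviation "k \<equiv> length xs"
abbreviation "l \<equiv> length ys"

lemma k_ge_3: "3 \<le> k" and l_ge_3: "3 \<le> l"
  using xs ys unfolding is_cyc_list_def by auto

lemma xs_nth_less: "a < k \<Longrightarrow> xs ! a < n"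
  using xs nth_mem unfolding is_cyc_list_def by fastforce

lemma ys_nth_less: "b < l \<Longrightarrow> ys ! b < n"
  using ys nth_mem unfolding is_cyc_list_def by fastforce

lemma xs_nth_eq_iff: "a < k \<Longrightarrow> b < k \<Longrightarrow> xs ! a = xs ! b \<longleftrightarrow> a = b"
  using xs nth_eq_iff_index_eq[of xs a b] unfolding is_cyc_list_def by simp

lemma ys_nth_eq_iff: "a < l \<Longrightarrow> b < l \<Longrightarrow> ys ! a = ys ! b \<longleftrightarrow> a = b"
  using ys nth_eq_iff_index_eq[of ys a b] unfolding is_cyc_list_def by simp

lemma xs_nth_neq_ys_nth: "a < k \<Longrightarrow> b < l \<Longrightarrow> xs ! a \<noteq> ys ! b"
  using disjoint nth_mem by fastforce

lemmas vertex_facts = k_ge_3 l_ge_3 xs_nth_less ys_nth_less xs_nth_eq_iff ys_nth_eq_iff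
  xs_nth_neq_ys_nth xs_nth_neq_ys_nth[THEN not_sym] cyc_succ_less cyc_pred_less cyc_succ_pred
  cyc_neighbours_distinct cyc_neighbours_distinct'

definition edge_crossing :: "(nat \<Rightarrow> point) \<Rightarrow> nat \<Rightarrow> nat \<Rightarrow> real" where
  "edge_crossing pos i j =
     eps (pos (xs ! i)) (pos (xs ! cyc_succ k i)) (pos (ys ! j)) (pos (ys ! cyc_succ l j))"

definition crossing_corr :: "nat \<Rightarrow> nat \<Rightarrow> nat \<Rightarrow> nat \<Rightarrow> real" where
  "crossing_corr i j i' j' = (\<integral>pos. edge_crossing pos i j * edge_crossing pos i' j' \<partial>embed_measure n)"

lemma lk_list_eq: "lk_list pos xs ys = (\<Sum>i<k. \<Sum>j<l. edge_crossing pos i j) / 2"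
  unfolding lk_list_def edge_crossing_def by (simp add: Suc_mod_eq_cyc_succ)

lemma integrable_crossing_product:
  "i < k \<Longrightarrow> j < l \<Longrightarrow> i' < k \<Longrightarrow> j' < l \<Longrightarrow>
   integrable (embed_measure n) (\<lambda>pos. edge_crossing pos i j * edge_crossing pos i' j')"
  unfolding edge_crossing_def by (rule integrable_eps_times_eps) (simp_all add: vertex_facts)

lemma crossing_corr_eq_integral:
  "(\<And>pos. edge_crossing pos i j * edge_crossing pos i' j' = F pos) \<Longrightarrow>
   crossing_corr i j i' j' = (\<integral>pos. F pos \<partial>embed_measure n)"
  unfolding crossing_corr_def by simp

lemma crossing_corr_far_left:
  assumes "i < k" "j < l" "i' < k" "j' < l" "i' \<noteq> i" "i' \<noteq> cyc_succ k i" "i' \<noteq> cyc_pred k i"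
  shows "crossing_corr i j i' j' = 0"
proof -
  have "cyc_succ k i' \<noteq> i" "cyc_succ k i' \<noteq> cyc_succ k i"
    using cyc_succ_eq_imp_pred[of i k i'] cyc_succ_inj[of i' k i] assms by auto
  have "crossing_corr i j i' j' = (\<integral>pos.
      eps (pos (ys ! j)) (pos (ys ! cyc_succ l j)) (pos (xs ! i)) (pos (xs ! cyc_succ k i)) *
      eps (pos (xs ! i')) (pos (xs ! cyc_succ k i')) (pos (ys ! j')) (pos (ys ! cyc_succ l j'))
      \<partial>embed_measure n)"
    by (rule crossing_corr_eq_integral) (simp add: edge_crossing_def eps_commute)
  also have "\<dots> = 0"
    by (rule integral_eps_lonely_edge)
      (use assms \<open>cyc_succ k i' \<noteq> i\<close> \<open>cyc_succ k i' \<noteq> cyc_succ k i\<close> in \<open>auto simp: vertex_facts\<close>)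
  finally show ?thesis .
qed

lemma crossing_corr_far_right:
  assumes "i < k" "j < l" "i' < k" "j' < l" "j' \<noteq> j" "j' \<noteq> cyc_succ l j" "j' \<noteq> cyc_pred l j"
  shows "crossing_corr i j i' j' = 0"
proof -
  have "cyc_succ l j' \<noteq> j" "cyc_succ l j' \<noteq> cyc_succ l j"
    using cyc_succ_eq_imp_pred[of j l j'] cyc_succ_inj[of j' l j] assms by auto
  with assms show ?thesis
    unfolding crossing_corr_def edge_crossing_def
    using integral_eps_lonely_edge by (simp add: vertex_facts)
qed

context
  fixes i j assumes i: "i < k" and j: "j < l"
begin

lemma crossing_corr_same: "crossing_corr i j i j = 2 * const_s"
  unfolding crossing_corr_def edge_crossing_def
  by (rule integral_eps_square) (use i j in \<open>simp_all add: vertex_facts\<close>)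

text \<open>Reverse or swap segments until the shared edge is the first segment of both factors.\<close>
lemma crossing_corr_common_edge:
  "crossing_corr i j i (cyc_succ l j) = const_u"
  "crossing_corr i j i (cyc_pred l j) = const_u"
  "crossing_corr i j (cyc_succ k i) j = const_u"
  "crossing_corr i j (cyc_pred k i) j = const_u"
proof -
  show "crossing_corr i j i (cyc_succ l j) = const_u"
    unfolding crossing_corr_def edge_crossing_def
    by (rule integral_eps_common_edge) (use i j in \<open>simp_all add: vertex_facts\<close>)
  have "crossing_corr i j i (cyc_pred l j) = (\<integral>pos.
      eps (pos (xs ! i)) (pos (xs ! cyc_succ k i)) (pos (ys ! cyc_pred l j)) (pos (ys ! j)) *
      eps (pos (xs ! i)) (pos (xs ! cyc_succ k i)) (pos (ys ! j)) (pos (ys ! cyc_succ l j))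
      \<partial>embed_measure n)"
    by (rule crossing_corr_eq_integral) (use j in \<open>simp add: edge_crossing_def cyc_succ_pred\<close>)
  also have "\<dots> = const_u"
    by (rule integral_eps_common_edge) (use i j in \<open>simp_all add: vertex_facts\<close>)
  finally show "crossing_corr i j i (cyc_pred l j) = const_u" .
  have "crossing_corr i j (cyc_succ k i) j = (\<integral>pos.
      eps (pos (ys ! j)) (pos (ys ! cyc_succ l j)) (pos (xs ! i)) (pos (xs ! cyc_succ k i)) *
      eps (pos (ys ! j)) (pos (ys ! cyc_succ l j)) (pos (xs ! cyc_succ k i))
        (pos (xs ! cyc_succ k (cyc_succ k i))) \<partial>embed_measure n)"
    by (rule crossing_corr_eq_integral) (simp add: edge_crossing_def eps_commute)
  also have "\<dots> = const_u"
    by (rule integral_eps_common_edge) (use i j in \<open>simp_all add: vertex_facts\<close>)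
  finally show "crossing_corr i j (cyc_succ k i) j = const_u" .
  have "crossing_corr i j (cyc_pred k i) j = (\<integral>pos.
      eps (pos (ys ! j)) (pos (ys ! cyc_succ l j)) (pos (xs ! cyc_pred k i)) (pos (xs ! i)) *
      eps (pos (ys ! j)) (pos (ys ! cyc_succ l j)) (pos (xs ! i)) (pos (xs ! cyc_succ k i))
      \<partial>embed_measure n)"
    by (rule crossing_corr_eq_integral)
      (use i in \<open>simp add: edge_crossing_def eps_commute cyc_succ_pred mult.commute\<close>)
  also have "\<dots> = const_u"
    by (rule integral_eps_common_edge) (use i j in \<open>simp_all add: vertex_facts\<close>)
  finally show "crossing_corr i j (cyc_pred k i) j = const_u" .
qed

text \<open>The mixed cases need one edge reversed in each factor.\<close>
lemma crossing_corr_adjacent_edges: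
  "crossing_corr i j (cyc_succ k i) (cyc_succ l j) = const_v"
  "crossing_corr i j (cyc_pred k i) (cyc_pred l j) = const_v"
  "crossing_corr i j (cyc_succ k i) (cyc_pred l j) = const_v"
  "crossing_corr i j (cyc_pred k i) (cyc_succ l j) = const_v"
proof -
  show "crossing_corr i j (cyc_succ k i) (cyc_succ l j) = const_v"
    unfolding crossing_corr_def edge_crossing_def
    by (rule integral_eps_adjacent_edges) (use i j in \<open>simp_all add: vertex_facts\<close>)
  have "crossing_corr i j (cyc_pred k i) (cyc_pred l j) = (\<integral>pos.
      eps (pos (xs ! cyc_pred k i)) (pos (xs ! i)) (pos (ys ! cyc_pred l j)) (pos (ys ! j)) *
      eps (pos (xs ! i)) (pos (xs ! cyc_succ k i)) (pos (ys ! j)) (pos (ys ! cyc_succ l j))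
      \<partial>embed_measure n)"
    by (rule crossing_corr_eq_integral)
      (use i j in \<open>simp add: edge_crossing_def cyc_succ_pred mult.commute\<close>)
  also have "\<dots> = const_v"
    by (rule integral_eps_adjacent_edges) (use i j in \<open>simp_all add: vertex_facts\<close>)
  finally show "crossing_corr i j (cyc_pred k i) (cyc_pred l j) = const_v" .
  have "crossing_corr i j (cyc_succ k i) (cyc_pred l j) = (\<integral>pos.
      eps (pos (xs ! i)) (pos (xs ! cyc_succ k i)) (pos (ys ! cyc_succ l j)) (pos (ys ! j)) *
      eps (pos (xs ! cyc_succ k i)) (pos (xs ! cyc_succ k (cyc_succ k i))) (pos (ys ! j))
        (pos (ys ! cyc_pred l j)) \<partial>embed_measure n)"
    by (rule crossing_corr_eq_integral)
      (use j in \<open>simp add: edge_crossing_def cyc_succ_pred eps_reverse_right[of _ _ "pos (ys ! j)" for pos]\<close>)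
  also have "\<dots> = const_v"
    by (rule integral_eps_adjacent_edges) (use i j in \<open>simp_all add: vertex_facts\<close>)
  finally show "crossing_corr i j (cyc_succ k i) (cyc_pred l j) = const_v" .
  have "crossing_corr i j (cyc_pred k i) (cyc_succ l j) = (\<integral>pos.
      eps (pos (xs ! cyc_pred k i)) (pos (xs ! i)) (pos (ys ! cyc_succ l (cyc_succ l j)))
        (pos (ys ! cyc_succ l j)) *
      eps (pos (xs ! i)) (pos (xs ! cyc_succ k i)) (pos (ys ! cyc_succ l j)) (pos (ys ! j))
      \<partial>embed_measure n)"
    by (rule crossing_corr_eq_integral)
      (use i in \<open>simp add: edge_crossing_def cyc_succ_pred mult.commute eps_reverse_right[of _ _ "pos (ys ! cyc_succ l j)" for pos]\<close>)
  also have "\<dots> = const_v"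
    by (rule integral_eps_adjacent_edges) (use i j in \<open>simp_all add: vertex_facts\<close>)
  finally show "crossing_corr i j (cyc_pred k i) (cyc_succ l j) = const_v" .
qed

text \<open>Only the nine pairs with i' equal or adjacent to i and j' equal or adjacent to j
  contribute.\<close>
lemma sum_crossing_corr: "(\<Sum>i'<k. \<Sum>j'<l. crossing_corr i j i' j') = 2 * const_q"
proof -
  let ?Si = "{i, cyc_succ k i, cyc_pred k i}" and ?Sj = "{j, cyc_succ l j, cyc_pred l j}"
  have "(\<Sum>i'<k. \<Sum>j'<l. crossing_corr i j i' j') = (\<Sum>i'\<in>?Si. \<Sum>j'<l. crossing_corr i j i' j')"
    by (rule sum.mono_neutral_right)
      (use i j in \<open>auto simp: cyc_succ_less cyc_pred_less crossing_corr_far_left intro!: sum.neutral\<close>)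
  also have "\<dots> = (\<Sum>i'\<in>?Si. \<Sum>j'\<in>?Sj. crossing_corr i j i' j')"
  proof (rule sum.cong[OF refl])
    fix i' assume "i' \<in> ?Si"
    then have "i' < k" using i by (auto simp: cyc_succ_less cyc_pred_less)
    then show "(\<Sum>j'<l. crossing_corr i j i' j') = (\<Sum>j'\<in>?Sj. crossing_corr i j i' j')"
      by (intro sum.mono_neutral_right)
        (use i j in \<open>auto simp: cyc_succ_less cyc_pred_less crossing_corr_far_right\<close>)
  qed
  also have "\<dots> = 2 * const_s + 4 * const_u + 4 * const_v"
    using i j k_ge_3 l_ge_3
    by (simp add: cyc_neighbours_distinct cyc_neighbours_distinct' crossing_corr_same
        crossing_corr_common_edge crossing_corr_adjacent_edges)
  finally show ?thesis unfolding const_q_def by simp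
qed

end

lemma integrable_lk_list_square: "integrable (embed_measure n) (\<lambda>pos. (lk_list pos xs ys)\<^sup>2)"
  and integral_lk_list_square: "(\<integral>pos. (lk_list pos xs ys)\<^sup>2 \<partial>embed_measure n) = real k * real l * const_q / 2"
proof -
  let ?S = "{..<k} \<times> {..<l}"
  let ?f = "\<lambda>p pos. edge_crossing pos (fst p) (snd p)"
  have lk: "(lk_list pos xs ys)\<^sup>2 = (\<Sum>p\<in>?S. ?f p pos)\<^sup>2 / 4" for pos
    unfolding lk_list_eq sum.cartesian_product by (simp add: case_prod_beta power_divide)
  have int: "integrable (embed_measure n) (\<lambda>pos. ?f p pos * ?f p' pos)" if "p \<in> ?S" "p' \<in> ?S" for p p'
    using integrable_crossing_product[of "fst p" "snd p" "fst p'" "snd p'"] that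
    by (auto simp: mem_Times_iff)
  show "integrable (embed_measure n) (\<lambda>pos. (lk_list pos xs ys)\<^sup>2)"
    unfolding lk by (intro integrable_divide integral_power2_sum(1)) (simp_all add: int)
  have "(\<integral>pos. (lk_list pos xs ys)\<^sup>2 \<partial>embed_measure n)
      = (\<Sum>p\<in>?S. \<Sum>p'\<in>?S. crossing_corr (fst p) (snd p) (fst p') (snd p')) / 4"
    unfolding lk crossing_corr_def by (simp add: integral_power2_sum(2) int)
  also have "\<dots> = (\<Sum>p\<in>?S. 2 * const_q) / 4"
  proof -
    have "(\<Sum>p'\<in>?S. crossing_corr (fst p) (snd p) (fst p') (snd p')) = 2 * const_q" if "p \<in> ?S" for p
      using sum_crossing_corr[of "fst p" "snd p"] that
      unfolding sum.cartesian_product by (simp add: case_prod_beta mem_Times_iff)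
    then show ?thesis by simp
  qed
  finally show "(\<integral>pos. (lk_list pos xs ys)\<^sup>2 \<partial>embed_measure n) = real k * real l * const_q / 2"
    by simp
qed

end

section \<open>Cycles as edge sets of cyclic vertex lists\<close>

definition cyc_edge :: "nat list \<Rightarrow> nat \<Rightarrow> nat set" where
  "cyc_edge xs i = {xs ! i, xs ! cyc_succ (length xs) i}"

lemma cyc_edges_eq_image: "cyc_edges xs = cyc_edge xs ` {..<length xs}"
  unfolding cyc_edges_def cyc_edge_def by (auto simp: Suc_mod_eq_cyc_succ)

lemma cyc_succ_eq_Suc: "Suc m < k \<Longrightarrow> cyc_succ k m = Suc m" unfolding cyc_succ_def by auto

lemma cyc_edge_inj:
  assumes "distinct xs" "3 \<le> length xs" "i < length xs" "i' < length xs" "cyc_edge xs i = cyc_edge xs i'"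
  shows "i = i'"
proof -
  let ?k = "length xs"
  have eq: "(xs ! i = xs ! i' \<and> xs ! cyc_succ ?k i = xs ! cyc_succ ?k i') \<or> (xs ! i = xs ! cyc_succ ?k i' \<and> xs ! cyc_succ ?k i = xs ! i')"
    using assms(5) unfolding cyc_edge_def doubleton_eq_iff .
  show ?thesis
  proof (cases "xs ! i = xs ! i'")
    case True then show ?thesis using assms by (simp add: nth_eq_iff_index_eq)
  next
    case False
    then have "xs ! i = xs ! cyc_succ ?k i'" "xs ! cyc_succ ?k i = xs ! i'" using eq by auto
    then have "i = cyc_succ ?k i'" "cyc_succ ?k i = i'" using assms by (simp_all add: nth_eq_iff_index_eq cyc_succ_less)
    then have "cyc_succ ?k (cyc_succ ?k i') = i'" by simp
    then show ?thesis using cyc_neighbours_distinct(4)[of ?k i'] assms by simp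
  qed
qed

lemma card_cyc_edges:
  assumes "distinct xs" "3 \<le> length xs"
  shows "card (cyc_edges xs) = length xs"
proof -
  have "inj_on (cyc_edge xs) {..<length xs}" using cyc_edge_inj[OF assms] by (auto simp: inj_on_def)
  then show ?thesis unfolding cyc_edges_eq_image by (simp add: card_image)
qed

lemma Union_cyc_edges:
  "\<Union>(cyc_edges xs) = set xs"
proof
  show "\<Union>(cyc_edges xs) \<subseteq> set xs" unfolding cyc_edges_eq_image cyc_edge_def
    by (auto cong: if_cong) (metis nth_mem cyc_succ_less)
  show "set xs \<subseteq> \<Union>(cyc_edges xs)" unfolding cyc_edges_eq_image cyc_edge_def
    by (auto simp: in_set_conv_nth)
qed

lemma finite_cyc_edges: "finite (cyc_edges xs)" unfolding cyc_edges_eq_image by simp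

lemma cyc_edges_eq_if_subset:
  assumes "distinct ys" "3 \<le> length ys" "distinct xs" "length xs = length ys"
    and "cyc_edges ys \<subseteq> cyc_edges xs"
  shows "cyc_edges ys = cyc_edges xs"
  by (rule card_subset_eq) (use assms in \<open>simp_all add: finite_cyc_edges card_cyc_edges\<close>)

lemma cyc_edge_rotate:
  assumes "i < length xs"
  shows "cyc_edge (rotate r xs) i = cyc_edge xs ((r + i) mod length xs)"
proof -
  let ?k = "length xs"
  have k0: "0 < ?k" using assms by (simp del: length_greater_0_conv)
  have a: "cyc_succ ?k i = Suc i mod ?k" using Suc_mod_eq_cyc_succ assms by simp
  have "(r + cyc_succ ?k i) mod ?k = (r + Suc i) mod ?k" unfolding a by (simp add: mod_add_right_eq)
  also have "\<dots> = Suc ((r + i) mod ?k) mod ?k" by (simp add: mod_Suc_eq)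
  also have "\<dots> = cyc_succ ?k ((r + i) mod ?k)" using k0 by (simp add: Suc_mod_eq_cyc_succ)
  finally have "(r + cyc_succ ?k i) mod ?k = cyc_succ ?k ((r + i) mod ?k)" .
  then show ?thesis unfolding cyc_edge_def using assms k0 by (simp add: nth_rotate cyc_succ_less)
qed

lemma cyc_edges_rotate:
  assumes "distinct xs" "3 \<le> length xs"
  shows "cyc_edges (rotate r xs) = cyc_edges xs"
proof (rule cyc_edges_eq_if_subset)
  show "cyc_edges (rotate r xs) \<subseteq> cyc_edges xs"
  proof
    fix E assume "E \<in> cyc_edges (rotate r xs)"
    then obtain x where x: "x < length xs" "E = cyc_edge (rotate r xs) x" unfolding cyc_edges_eq_image by auto
    then have "(r + x) mod length xs < length xs" by (intro mod_less_divisor) linarith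
    then show "E \<in> cyc_edges xs" unfolding cyc_edges_eq_image x(2) cyc_edge_rotate[OF x(1)] by blast
  qed
qed (use assms in simp_all)

lemma cyc_edge_rev_mem:
  assumes "i < length xs"
  shows "cyc_edge (rev xs) i \<in> cyc_edges xs"
proof -
  let ?k = "length xs"
  show ?thesis
  proof (cases "Suc i < ?k")
    case True
    have "cyc_edge (rev xs) i = cyc_edge xs (?k - Suc (Suc i))"
      unfolding cyc_edge_def using True by (auto simp: rev_nth cyc_succ_eq_Suc Suc_diff_Suc)
    then show ?thesis unfolding cyc_edges_eq_image using True by auto
  next
    case False
    then have i: "i = ?k - 1" using assms by simp
    have r1: "rev xs ! (?k - 1) = xs ! 0" and r0: "rev xs ! 0 = xs ! (?k - 1)"
    proof -
      have k0: "0 < ?k" using assms by linarith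
      show "rev xs ! (?k - 1) = xs ! 0" using k0 by (simp add: rev_nth)
      show "rev xs ! 0 = xs ! (?k - 1)" using k0 by (simp add: rev_nth)
    qed
    have n1: "cyc_succ ?k (?k - 1) = 0" using assms unfolding cyc_succ_def by simp
    have "cyc_edge (rev xs) i = cyc_edge xs (?k - 1)"
      unfolding cyc_edge_def i length_rev n1 r1 r0 by (auto simp: insert_commute)
    then show ?thesis unfolding cyc_edges_eq_image using assms by auto
  qed
qed

lemma cyc_edges_rev:
  assumes "distinct xs" "3 \<le> length xs"
  shows "cyc_edges (rev xs) = cyc_edges xs"
proof (rule cyc_edges_eq_if_subset)
  show "cyc_edges (rev xs) \<subseteq> cyc_edges xs"
    unfolding cyc_edges_eq_image[of "rev xs"] using cyc_edge_rev_mem by auto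
qed (use assms in simp_all)

lemma cyc_edge_neighbour:
  assumes "distinct xs" "m < length xs" "i < length xs" "{xs ! m, z} = cyc_edge xs i"
  shows "z = xs ! cyc_succ (length xs) m \<or> z = xs ! cyc_pred (length xs) m"
proof -
  let ?k = "length xs"
  have "(xs ! m = xs ! i \<and> z = xs ! cyc_succ ?k i) \<or> (xs ! m = xs ! cyc_succ ?k i \<and> z = xs ! i)"
    using assms(4) unfolding cyc_edge_def doubleton_eq_iff .
  then show ?thesis
  proof
    assume "xs ! m = xs ! i \<and> z = xs ! cyc_succ ?k i"
    then show ?thesis using assms by (simp add: nth_eq_iff_index_eq)
  next
    assume h: "xs ! m = xs ! cyc_succ ?k i \<and> z = xs ! i"
    then have "m = cyc_succ ?k i" using assms by (simp add: nth_eq_iff_index_eq cyc_succ_less)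
    then have "i = cyc_pred ?k m" using assms by (simp add: cyc_pred_succ)
    then show ?thesis using h by simp
  qed
qed

lemma funpow_cyc_succ: "r < k \<Longrightarrow> (cyc_succ k ^^ j) r = (r + j) mod k"
proof (induction j)
  case 0 then show ?case by simp
next
  case (Suc j)
  have "0 < k" using Suc by simp
  then have "(r + Suc j) mod k = ((r + j) mod k + 1) mod k" by (simp add: mod_Suc_eq)
  also have "\<dots> = cyc_succ k ((r + j) mod k)" using \<open>0 < k\<close> by (simp add: Suc_mod_eq_cyc_succ)
  finally show ?case using Suc by simp
qed

lemma same_cyc_edges_imp_rotate:
  assumes dx: "distinct xs" and dy: "distinct ys" and k3: "3 \<le> length xs" and len: "length ys = length xs"
    and E: "cyc_edges ys = cyc_edges xs" and r: "r < length xs"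
    and y0: "ys ! 0 = xs ! r" and y1: "ys ! 1 = xs ! cyc_succ (length xs) r"
  shows "ys = rotate r xs"
proof -
  let ?k = "length xs" and ?a = "\<lambda>j. (cyc_succ (length xs) ^^ j) r"
  have alt: "?a j < ?k" for j using r by (induction j) (simp_all add: cyc_succ_less)
  have P: "Suc j < ?k \<Longrightarrow> ys ! j = xs ! ?a j \<and> ys ! Suc j = xs ! ?a (Suc j)" for j
  proof (induction j)
    case 0 then show ?case using y0 y1 by simp
  next
    case (Suc j)
    then have IH: "ys ! j = xs ! ?a j" "ys ! Suc j = xs ! ?a (Suc j)" by simp_all
    have "cyc_edge ys (Suc j) \<in> cyc_edges xs" using E Suc.prems len unfolding cyc_edges_eq_image[of ys] by auto
    then obtain i where i: "i < ?k" "cyc_edge ys (Suc j) = cyc_edge xs i" unfolding cyc_edges_eq_image by auto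
    have ee: "cyc_edge ys (Suc j) = {xs ! ?a (Suc j), ys ! Suc (Suc j)}"
      unfolding cyc_edge_def using Suc.prems len IH by (simp add: cyc_succ_eq_Suc)
    have "{xs ! ?a (Suc j), ys ! Suc (Suc j)} = cyc_edge xs i" using ee i(2) by simp
    then have "ys ! Suc (Suc j) = xs ! cyc_succ ?k (?a (Suc j)) \<or> ys ! Suc (Suc j) = xs ! cyc_pred ?k (?a (Suc j))"
      by (rule cyc_edge_neighbour[OF dx alt i(1)])
    moreover have "cyc_pred ?k (?a (Suc j)) = ?a j" using alt[of j] by (simp add: cyc_pred_succ)
    moreover have "ys ! Suc (Suc j) \<noteq> ys ! j" using dy Suc.prems len by (simp add: nth_eq_iff_index_eq)
    ultimately show ?case using IH by auto
  qed
  show ?thesis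
  proof (rule nth_equalityI)
    show "length ys = length (rotate r xs)" using len by simp
    fix j assume "j < length ys"
    then have j: "j < ?k" using len by simp
    have "ys ! j = xs ! ?a j"
    proof (cases "Suc j < ?k")
      case True then show ?thesis using P by blast
    next
      case False
      then have "j = Suc (j - 1)" using j k3 by simp
      then show ?thesis using P[of "j - 1"] j by (metis False)
    qed
    then show "ys ! j = rotate r xs ! j" using j r by (simp add: nth_rotate funpow_cyc_succ)
  qed
qed

definition cyc_reps :: "nat \<Rightarrow> nat set set \<Rightarrow> nat list set" where
  "cyc_reps n C = {xs. is_cyc_list n xs \<and> cyc_edges xs = C}"

text \<open>Two cyclic lists with the same edges agree up to rotation and reversal: the first
  vertex of one occurs in the other, and its neighbour in the list fixes the direction.\<close>
lemma same_cyc_edges_imp_rotation: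
  assumes dx: "distinct xs" and k3: "3 \<le> length xs" and dy: "distinct ys" and ky: "3 \<le> length ys"
    and E: "cyc_edges ys = cyc_edges xs"
  shows "\<exists>r < length xs. ys = rotate r xs \<or> ys = rotate r (rev xs)"
proof -
  let ?k = "length xs"
  have len: "length ys = ?k" using card_cyc_edges[OF dy ky] card_cyc_edges[OF dx k3] E by simp
  have "ys ! 0 \<in> set ys" using len k3 by (intro nth_mem) linarith
  then have "ys ! 0 \<in> set xs"
    using Union_cyc_edges[of ys] Union_cyc_edges[of xs] E by simp
  then obtain r where r: "r < ?k" "ys ! 0 = xs ! r" by (auto simp: in_set_conv_nth)
  have "0 \<in> {..<length ys}" unfolding len lessThan_iff using k3 by linarith
  then have "cyc_edge ys 0 \<in> cyc_edges ys"
    unfolding cyc_edges_eq_image by (rule imageI)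
  then have "cyc_edge ys 0 \<in> cyc_edges xs" using E by simp
  then obtain i where i: "i < ?k" "cyc_edge ys 0 = cyc_edge xs i"
    unfolding cyc_edges_eq_image by auto
  have "{xs ! r, ys ! 1} = cyc_edge xs i"
    using i(2) r(2) len k3 by (simp add: cyc_edge_def cyc_succ_def)
  then have "ys ! 1 = xs ! cyc_succ ?k r \<or> ys ! 1 = xs ! cyc_pred ?k r"
    by (rule cyc_edge_neighbour[OF dx r(1) i(1)])
  then show ?thesis
  proof
    assume "ys ! 1 = xs ! cyc_succ ?k r"
    then have "ys = rotate r xs" by (rule same_cyc_edges_imp_rotate[OF dx dy k3 len E r])
    then show ?thesis using r by auto
  next
    assume h: "ys ! 1 = xs ! cyc_pred ?k r"
    let ?r = "?k - Suc r"
    have Er: "cyc_edges ys = cyc_edges (rev xs)" using E cyc_edges_rev[OF dx k3] by simp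
    have a0: "ys ! 0 = rev xs ! ?r" using r by (simp add: rev_nth)
    have "?k - Suc (cyc_succ ?k ?r) = cyc_pred ?k r" using r k3 by (auto simp: cyc_succ_def cyc_pred_def)
    then have a1: "ys ! 1 = rev xs ! cyc_succ (length (rev xs)) ?r"
      using h r by (simp add: rev_nth cyc_succ_less)
    have "ys = rotate ?r (rev xs)"
      by (rule same_cyc_edges_imp_rotate[OF _ dy _ _ Er _ a0 a1]) (use dx k3 len r in simp_all)
    moreover have "?r < ?k" using r by simp
    ultimately show ?thesis by blast
  qed
qed

lemma cyc_reps_cyc_edges:
  assumes xs: "is_cyc_list n xs"
  shows "cyc_reps n (cyc_edges xs) =
         (\<lambda>r. rotate r xs) ` {..<length xs} \<union> (\<lambda>r. rotate r (rev xs)) ` {..<length xs}"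
proof -
  have dx: "distinct xs" and k3: "3 \<le> length xs" and sx: "set xs \<subseteq> {..<n}"
    using xs unfolding is_cyc_list_def by auto
  have rev: "cyc_edges (rotate r (rev xs)) = cyc_edges xs" for r
    using cyc_edges_rotate[of "rev xs" r] cyc_edges_rev[OF dx k3] dx k3 by simp
  show ?thesis
  proof (intro set_eqI iffI)
    fix ys assume "ys \<in> cyc_reps n (cyc_edges xs)"
    then have "distinct ys" "3 \<le> length ys" "cyc_edges ys = cyc_edges xs"
      unfolding cyc_reps_def is_cyc_list_def by auto
    then show "ys \<in> (\<lambda>r. rotate r xs) ` {..<length xs} \<union> (\<lambda>r. rotate r (rev xs)) ` {..<length xs}"
      using same_cyc_edges_imp_rotation[OF dx k3] by blast
  next
    fix ys assume "ys \<in> (\<lambda>r. rotate r xs) ` {..<length xs} \<union> (\<lambda>r. rotate r (rev xs)) ` {..<length xs}"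
    then show "ys \<in> cyc_reps n (cyc_edges xs)"
      using dx k3 sx rev unfolding cyc_reps_def is_cyc_list_def by (auto simp: cyc_edges_rotate)
  qed
qed

lemma inj_on_rotate:
  assumes "distinct xs"
  shows "inj_on (\<lambda>r. rotate r xs) {..<length xs}"
proof (rule inj_onI)
  fix r r' assume r: "r \<in> {..<length xs}" "r' \<in> {..<length xs}" and "rotate r xs = rotate r' xs"
  then have "rotate r xs ! 0 = rotate r' xs ! 0" by simp
  moreover have "0 < length xs" using r by auto
  ultimately have "xs ! r = xs ! r'" using r by (simp add: nth_rotate)
  then show "r = r'" using assms r nth_eq_iff_index_eq by auto
qed

lemma rotate_neq_rotate_rev:
  assumes "distinct xs" "3 \<le> length xs" "r < length xs" "r' < length xs"
  shows "rotate r xs \<noteq> rotate r' (rev xs)"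
proof
  let ?k = "length xs"
  assume eq: "rotate r xs = rotate r' (rev xs)"
  have ne: "xs \<noteq> []" using assms(2) by auto
  have nth: "xs ! ((r + m) mod ?k) = xs ! (?k - Suc ((r' + m) mod ?k))" if "m < ?k" for m
  proof -
    have "(r' + m) mod ?k < ?k" using that by (intro mod_less_divisor) linarith
    then show ?thesis
      using arg_cong[OF eq, of "\<lambda>zs. zs ! m"] that by (simp add: nth_rotate rev_nth)
  qed
  have "xs ! r = xs ! (?k - Suc r')" "xs ! cyc_succ ?k r = xs ! (?k - Suc (cyc_succ ?k r'))"
    using nth[of 0] nth[of 1] assms ne by (simp_all add: Suc_mod_eq_cyc_succ)
  then have "r = ?k - Suc r'" "cyc_succ ?k r = ?k - Suc (cyc_succ ?k r')"
    using assms by (simp_all add: nth_eq_iff_index_eq cyc_succ_less)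
  then show False using assms by (auto simp: cyc_succ_def split: if_splits)
qed

lemma card_cyc_reps_cyc_edges:
  assumes xs: "is_cyc_list n xs"
  shows "card (cyc_reps n (cyc_edges xs)) = 2 * length xs"
proof -
  have dx: "distinct xs" and k3: "3 \<le> length xs"
    using xs unfolding is_cyc_list_def by auto
  have "(\<lambda>r. rotate r xs) ` {..<length xs} \<inter> (\<lambda>r. rotate r (rev xs)) ` {..<length xs} = {}"
    using rotate_neq_rotate_rev[OF dx k3] by auto
  then show ?thesis unfolding cyc_reps_cyc_edges[OF xs]
    using inj_on_rotate[OF dx] inj_on_rotate[of "rev xs"] dx
    by (simp add: card_Un_disjoint card_image)
qed

lemma length_le_if_is_cyc_list: "is_cyc_list n xs \<Longrightarrow> length xs \<le> n"
  unfolding is_cyc_list_def using distinct_card[of xs] card_mono[of "{..<n}" "set xs"] by auto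

lemma finite_cyc_lists: "finite {xs. is_cyc_list n xs}"
proof (rule finite_subset)
  show "{xs. is_cyc_list n xs} \<subseteq> {xs. set xs \<subseteq> {..<n} \<and> length xs \<le> n}"
    using length_le_if_is_cyc_list unfolding is_cyc_list_def by auto
qed (rule finite_lists_length_le, simp)

lemma finite_cycles: "finite (cycles n)"
proof -
  have "cycles n = cyc_edges ` {xs. is_cyc_list n xs}" unfolding cycles_def by auto
  then show ?thesis using finite_cyc_lists by simp
qed

lemma finite_disj_cycle_pairs: "finite (disj_cycle_pairs n)"
  by (rule finite_subset[of _ "Pow (cycles n)"]) (auto simp: disj_cycle_pairs_def finite_cycles)

lemma finite_cyc_reps: "finite (cyc_reps n C)"
  by (rule finite_subset[OF _ finite_cyc_lists]) (auto simp: cyc_reps_def)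

lemma some_cyc_rep:
  assumes "C \<in> cycles n"
  defines "xs \<equiv> SOME xs. is_cyc_list n xs \<and> cyc_edges xs = C"
  shows "is_cyc_list n xs" "cyc_edges xs = C" "card C = length xs" "cyc_verts C = set xs"
proof -
  have "is_cyc_list n xs \<and> cyc_edges xs = C"
    unfolding xs_def by (rule someI_ex) (use assms(1) in \<open>auto simp: cycles_def\<close>)
  then show "is_cyc_list n xs" "cyc_edges xs = C" by auto
  then show "card C = length xs" "cyc_verts C = set xs"
    using card_cyc_edges[of xs] Union_cyc_edges[of xs] unfolding is_cyc_list_def cyc_verts_def by auto
qed

lemma card_cyc_reps:
  assumes "C \<in> cycles n"
  shows "card (cyc_reps n C) = 2 * card C"
proof -
  obtain xs where xs: "is_cyc_list n xs" "cyc_edges xs = C"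
    using assms unfolding cycles_def by blast
  then have "card C = length xs"
    using card_cyc_edges[of xs] unfolding is_cyc_list_def by auto
  then show ?thesis using card_cyc_reps_cyc_edges[OF xs(1)] xs(2) by simp
qed

lemma cyc_verts_nonempty: "C \<in> cycles n \<Longrightarrow> cyc_verts C \<noteq> {}"
  using some_cyc_rep[of C n] unfolding is_cyc_list_def by auto

lemma disj_cycle_pairsE:
  assumes "Pr \<in> disj_cycle_pairs n"
  obtains C C' where "Pr = {C, C'}" "C \<in> cycles n" "C' \<in> cycles n" "C \<noteq> C'"
    "cyc_verts C \<inter> cyc_verts C' = {}"
proof -
  obtain C C' where "Pr = {C, C'}" "C \<in> cycles n" "C' \<in> cycles n" "cyc_verts C \<inter> cyc_verts C' = {}"
    using assms unfolding disj_cycle_pairs_def by blast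
  moreover have "C \<noteq> C'" using calculation cyc_verts_nonempty[of C n] by auto
  ultimately show ?thesis using that by blast
qed

lemma sq_lk_pair_eq_lk_list:
  assumes "Pr \<in> disj_cycle_pairs n"
  obtains xs ys where "disjoint_cyc_lists n xs ys" "(\<Prod>C\<in>Pr. card C) = length xs * length ys"
    "\<And>pos. sq_lk_pair n pos Pr = (lk_list pos xs ys)\<^sup>2"
proof -
  obtain C1 C2 where P: "Pr = {C1, C2}" "C1 \<in> cycles n" "C2 \<in> cycles n" "C1 \<noteq> C2"
    "cyc_verts C1 \<inter> cyc_verts C2 = {}"
    using assms by (rule disj_cycle_pairsE)
  define C where "C = (SOME C. C \<in> Pr)"
  define C' where "C' = (SOME C'. C' \<in> Pr \<and> C' \<noteq> C)"
  have C: "C \<in> Pr" unfolding C_def by (rule someI_ex) (use P in auto)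
  have C': "C' \<in> Pr \<and> C' \<noteq> C" unfolding C'_def by (rule someI_ex) (use P C in auto)
  have PC: "Pr = {C, C'}" and Cc: "C \<in> cycles n" "C' \<in> cycles n"
    and dv: "cyc_verts C \<inter> cyc_verts C' = {}"
    using C C' P by auto
  define xs where "xs = (SOME xs. is_cyc_list n xs \<and> cyc_edges xs = C)"
  define ys where "ys = (SOME ys. is_cyc_list n ys \<and> cyc_edges ys = C')"
  note rx = some_cyc_rep[OF Cc(1), folded xs_def] and ry = some_cyc_rep[OF Cc(2), folded ys_def]
  show ?thesis
  proof
    show "disjoint_cyc_lists n xs ys"
      using rx ry dv by unfold_locales simp_all
    show "(\<Prod>C\<in>Pr. card C) = length xs * length ys"
      using PC C' rx ry by simp
    show "sq_lk_pair n pos Pr = (lk_list pos xs ys)\<^sup>2" for pos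
      unfolding sq_lk_pair_def Let_def lk_def C_def[symmetric] C'_def[symmetric] xs_def ys_def ..
  qed
qed

lemma integrable_sq_lk_pair:
  assumes "Pr \<in> disj_cycle_pairs n"
  shows "integrable (embed_measure n) (\<lambda>pos. sq_lk_pair n pos Pr)"
proof -
  obtain xs ys where "disjoint_cyc_lists n xs ys" "\<And>pos. sq_lk_pair n pos Pr = (lk_list pos xs ys)\<^sup>2"
    using sq_lk_pair_eq_lk_list[OF assms] by blast
  then show ?thesis
    using disjoint_cyc_lists.integrable_lk_list_square by simp
qed

lemma integral_sq_lk_pair:
  assumes "Pr \<in> disj_cycle_pairs n"
  shows "(\<integral>pos. sq_lk_pair n pos Pr \<partial>embed_measure n) = const_q / 2 * real (\<Prod>C\<in>Pr. card C)"
proof -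
  obtain xs ys where "disjoint_cyc_lists n xs ys" "(\<Prod>C\<in>Pr. card C) = length xs * length ys"
    "\<And>pos. sq_lk_pair n pos Pr = (lk_list pos xs ys)\<^sup>2"
    using sq_lk_pair_eq_lk_list[OF assms] by blast
  then show ?thesis
    using disjoint_cyc_lists.integral_lk_list_square by simp
qed

lemma mean_sq_lk_eq_sum_prod_card:
  "mean_sq_lk n = const_q / 2 * (\<Sum>Pr\<in>disj_cycle_pairs n. real (\<Prod>C\<in>Pr. card C))"
proof -
  have "mean_sq_lk n = (\<Sum>Pr\<in>disj_cycle_pairs n. \<integral>pos. sq_lk_pair n pos Pr \<partial>embed_measure n)"
    unfolding mean_sq_lk_def
    by (rule Bochner_Integration.integral_sum) (rule integrable_sq_lk_pair)
  also have "\<dots> = (\<Sum>Pr\<in>disj_cycle_pairs n. const_q / 2 * real (\<Prod>C\<in>Pr. card C))"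
    by (rule sum.cong[OF refl]) (rule integral_sq_lk_pair)
  finally show ?thesis by (simp add: sum_distrib_left)
qed

section \<open>Counting pairs of disjoint cycles\<close>

lemma card_eq_sum_card_fibres:
  assumes "finite A" "finite B" "f ` A \<subseteq> B"
  shows "card A = (\<Sum>b\<in>B. card {a \<in> A. f a = b})"
  using sum.group[OF assms, of "\<lambda>_. 1 :: nat"] by simp

definition disj_cyc_list_pairs :: "nat \<Rightarrow> (nat list \<times> nat list) set" where
  "disj_cyc_list_pairs n = {(xs, ys). is_cyc_list n xs \<and> is_cyc_list n ys \<and> set xs \<inter> set ys = {}}"

lemma finite_disj_cyc_list_pairs: "finite (disj_cyc_list_pairs n)"
  by (rule finite_subset[of _ "{xs. is_cyc_list n xs} \<times> {xs. is_cyc_list n xs}"])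
     (auto simp: disj_cyc_list_pairs_def finite_cyc_lists)

text \<open>Each pair of disjoint cycles is hit by 2 |C| * 2 |C'| ordered list pairs in
  each of its two orders.\<close>
lemma card_disj_cyc_list_pairs_fibre:
  assumes "Pr \<in> disj_cycle_pairs n"
  shows "card {p \<in> disj_cyc_list_pairs n. {cyc_edges (fst p), cyc_edges (snd p)} = Pr}
       = 8 * (\<Prod>C\<in>Pr. card C)"
proof -
  obtain C1 C2 where P: "Pr = {C1, C2}" "C1 \<in> cycles n" "C2 \<in> cycles n" "C1 \<noteq> C2"
    "cyc_verts C1 \<inter> cyc_verts C2 = {}"
    using assms by (rule disj_cycle_pairsE)
  have verts: "set xs = cyc_verts C" if "xs \<in> cyc_reps n C" for xs C
    using that Union_cyc_edges[of xs] unfolding cyc_reps_def cyc_verts_def by auto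
  have "{p \<in> disj_cyc_list_pairs n. {cyc_edges (fst p), cyc_edges (snd p)} = Pr} =
      cyc_reps n C1 \<times> cyc_reps n C2 \<union> cyc_reps n C2 \<times> cyc_reps n C1" (is "?F = ?U")
  proof
    show "?F \<subseteq> ?U"
    proof
      fix p assume "p \<in> ?F"
      then obtain xs ys where "p = (xs, ys)" "is_cyc_list n xs" "is_cyc_list n ys"
        "{cyc_edges xs, cyc_edges ys} = {C1, C2}"
        using P(1) unfolding disj_cyc_list_pairs_def by auto
      then show "p \<in> ?U" unfolding cyc_reps_def doubleton_eq_iff by auto
    qed
    show "?U \<subseteq> ?F"
    proof
      fix p assume "p \<in> ?U"
      then obtain xs ys where p: "p = (xs, ys)" and
        h: "(xs \<in> cyc_reps n C1 \<and> ys \<in> cyc_reps n C2) \<or> (xs \<in> cyc_reps n C2 \<and> ys \<in> cyc_reps n C1)"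
        by auto
      have "set xs \<inter> set ys = {}" using h verts P(5) by auto
      moreover have "{cyc_edges xs, cyc_edges ys} = Pr" using h P(1) unfolding cyc_reps_def by auto
      ultimately show "p \<in> ?F" using h p unfolding disj_cyc_list_pairs_def cyc_reps_def by auto
    qed
  qed
  moreover have "(cyc_reps n C1 \<times> cyc_reps n C2) \<inter> (cyc_reps n C2 \<times> cyc_reps n C1) = {}"
    using P(4) unfolding cyc_reps_def by auto
  ultimately show ?thesis
    using P card_cyc_reps[OF P(2)] card_cyc_reps[OF P(3)]
    by (simp add: card_Un_disjoint card_cartesian_product finite_cyc_reps)
qed

lemma card_disj_cyc_list_pairs_eq_sum_prod_card:
  "card (disj_cyc_list_pairs n) = 8 * (\<Sum>Pr\<in>disj_cycle_pairs n. \<Prod>C\<in>Pr. card C)"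
proof -
  let ?edges = "\<lambda>p. {cyc_edges (fst p), cyc_edges (snd p)}"
  have "?edges ` disj_cyc_list_pairs n \<subseteq> disj_cycle_pairs n"
  proof clarify
    fix xs ys assume "(xs, ys) \<in> disj_cyc_list_pairs n"
    then have "cyc_edges xs \<in> cycles n" "cyc_edges ys \<in> cycles n"
      "cyc_verts (cyc_edges xs) \<inter> cyc_verts (cyc_edges ys) = {}"
      unfolding disj_cyc_list_pairs_def cycles_def cyc_verts_def Union_cyc_edges by auto
    then show "?edges (xs, ys) \<in> disj_cycle_pairs n"
      unfolding disj_cycle_pairs_def by auto
  qed
  then have "card (disj_cyc_list_pairs n)
      = (\<Sum>Pr\<in>disj_cycle_pairs n. card {p \<in> disj_cyc_list_pairs n. ?edges p = Pr})"
    by (rule card_eq_sum_card_fibres[OF finite_disj_cyc_list_pairs finite_disj_cycle_pairs])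
  also have "\<dots> = (\<Sum>Pr\<in>disj_cycle_pairs n. 8 * (\<Prod>C\<in>Pr. card C))"
    by (rule sum.cong[OF refl]) (rule card_disj_cyc_list_pairs_fibre)
  finally show ?thesis by (simp add: sum_distrib_left)
qed

lemma of_nat_prod_eq_fact_div: "m \<le> n \<Longrightarrow> real (\<Prod>{n - m + 1..n}) = fact n / fact (n - m)"
proof -
  assume "m \<le> n"
  have "(fact n :: nat) = fact (n - m) * \<Prod>{Suc (n - m)..n}" by (rule fact_eq_fact_times) simp
  then have "(fact n :: real) = fact (n - m) * real (\<Prod>{Suc (n - m)..n})"
    by (metis of_nat_fact of_nat_mult)
  then show ?thesis by (simp add: field_simps)
qed

lemma card_disj_cyc_list_pairs_of_lengths:
  assumes "3 \<le> k" "3 \<le> l" "k + l \<le> n"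
  shows "card {p \<in> disj_cyc_list_pairs n. length (fst p) = k \<and> length (snd p) = l} = \<Prod>{n - (k + l) + 1..n}"
proof -
  let ?D = "{zs. length zs = k + l \<and> distinct zs \<and> set zs \<subseteq> {..<n}}"
  let ?sp = "\<lambda>zs. (take k zs, drop k zs)"
  have eq: "{p \<in> disj_cyc_list_pairs n. length (fst p) = k \<and> length (snd p) = l} = ?sp ` ?D"
  proof
    show "{p \<in> disj_cyc_list_pairs n. length (fst p) = k \<and> length (snd p) = l} \<subseteq> ?sp ` ?D"
    proof
      fix p assume "p \<in> {p \<in> disj_cyc_list_pairs n. length (fst p) = k \<and> length (snd p) = l}"
      then obtain xs ys where p: "p = (xs, ys)" "is_cyc_list n xs" "is_cyc_list n ys" "set xs \<inter> set ys = {}"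
        "length xs = k" "length ys = l" unfolding disj_cyc_list_pairs_def by auto
      then have "xs @ ys \<in> ?D" unfolding is_cyc_list_def by auto
      moreover have "p = ?sp (xs @ ys)" using p by simp
      ultimately show "p \<in> ?sp ` ?D" by blast
    qed
    show "?sp ` ?D \<subseteq> {p \<in> disj_cyc_list_pairs n. length (fst p) = k \<and> length (snd p) = l}"
    proof
      fix p assume "p \<in> ?sp ` ?D"
      then obtain zs where z: "p = ?sp zs" "length zs = k + l" "distinct zs" "set zs \<subseteq> {..<n}" by auto
      have d: "distinct (take k zs @ drop k zs)" using z by simp
      have "set (take k zs) \<subseteq> {..<n}" "set (drop k zs) \<subseteq> {..<n}"
        using z set_take_subset[of k zs] set_drop_subset[of k zs] by auto
      then show "p \<in> {p \<in> disj_cyc_list_pairs n. length (fst p) = k \<and> length (snd p) = l}"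
        using z d assms unfolding disj_cyc_list_pairs_def is_cyc_list_def by (auto simp del: append_take_drop_id)
    qed
  qed
  have inj: "inj_on ?sp ?D"
  proof (rule inj_onI)
    fix zs zs' assume "?sp zs = ?sp zs'"
    then show "zs = zs'" by (metis append_take_drop_id prod.inject)
  qed
  have "card ?D = \<Prod>{card {..<n} - (k + l) + 1..card {..<n}}"
    by (rule card_lists_distinct_length_eq) (use assms in auto)
  then show ?thesis unfolding eq card_image[OF inj] by simp
qed

lemma card_disj_cyc_list_pairs_eq_sum_fact:
  "real (card (disj_cyc_list_pairs n)) = (\<Sum>k = 3..n - 3. \<Sum>l = 3..n - k. fact n / fact (n - k - l))"
proof -
  let ?lengths = "\<lambda>p. (length (fst p), length (snd p))"
  let ?S = "SIGMA k:{3..n-3}. {3..n-k}"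
  have img: "?lengths ` disj_cyc_list_pairs n \<subseteq> ?S"
  proof
    fix q assume "q \<in> ?lengths ` disj_cyc_list_pairs n"
    then obtain xs ys where q: "q = (length xs, length ys)" and "(xs, ys) \<in> disj_cyc_list_pairs n"
      by auto
    then have "is_cyc_list n (xs @ ys)" "3 \<le> length xs" "3 \<le> length ys"
      unfolding disj_cyc_list_pairs_def is_cyc_list_def by auto
    then show "q \<in> ?S"
      unfolding q using length_le_if_is_cyc_list[of n "xs @ ys"] by auto
  qed
  have "card (disj_cyc_list_pairs n) = (\<Sum>q\<in>?S. card {p \<in> disj_cyc_list_pairs n. ?lengths p = q})"
    by (rule card_eq_sum_card_fibres[OF finite_disj_cyc_list_pairs _ img]) simp
  also have "\<dots> = (\<Sum>k = 3..n - 3. \<Sum>l = 3..n - k. card {p \<in> disj_cyc_list_pairs n. ?lengths p = (k, l)})"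
    by (subst sum.Sigma) (auto simp: case_prod_beta prod_eq_iff)
  also have "\<dots> = (\<Sum>k = 3..n - 3. \<Sum>l = 3..n - k. \<Prod>{n - (k + l) + 1..n})"
  proof (intro sum.cong refl)
    fix k l assume "k \<in> {3..n - 3}" "l \<in> {3..n - k}"
    moreover from this have "k + l \<le> n" by auto
    ultimately show "card {p \<in> disj_cyc_list_pairs n. ?lengths p = (k, l)} = \<Prod>{n - (k + l) + 1..n}"
      using card_disj_cyc_list_pairs_of_lengths[of k l n] by simp
  qed
  finally have "real (card (disj_cyc_list_pairs n))
      = (\<Sum>k = 3..n - 3. \<Sum>l = 3..n - k. real (\<Prod>{n - (k + l) + 1..n}))"
    by simp
  also have "\<dots> = (\<Sum>k = 3..n - 3. \<Sum>l = 3..n - k. fact n / fact (n - k - l))"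
    by (intro sum.cong refl, subst of_nat_prod_eq_fact_div) (auto simp: diff_diff_left)
  finally show ?thesis .
qed

lemma sum_sum_eq_sum_by_total:
  fixes g :: "nat \<Rightarrow> real"
  shows "(\<Sum>k = 3..m - 3. \<Sum>l = 3..m - k. g (k + l)) = (\<Sum>i = 6..m. g i * (real i - 5))"
proof -
  let ?S = "SIGMA k:{3..m-3}. {3..m-k}"
  let ?fibre = "\<lambda>i. {p \<in> ?S. fst p + snd p = i}"
  have card_fibre: "card (?fibre i) = i - 5" if "i \<in> {6..m}" for i
  proof -
    have "?fibre i = (\<lambda>k. (k, i - k)) ` {3..i-3}"
      using that by (auto simp: image_iff)
    moreover have "inj_on (\<lambda>k. (k, i - k)) {3..i-3}"
      by (auto simp: inj_on_def)
    ultimately show ?thesis using that by (simp add: card_image)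
  qed
  have "(\<Sum>k = 3..m - 3. \<Sum>l = 3..m - k. g (k + l)) = (\<Sum>p\<in>?S. g (fst p + snd p))"
    by (subst sum.Sigma) (auto simp: case_prod_beta)
  also have "\<dots> = (\<Sum>i = 6..m. \<Sum>p\<in>?fibre i. g (fst p + snd p))"
    by (rule sum.group[symmetric]) auto
  also have "\<dots> = (\<Sum>i = 6..m. g i * (real i - 5))"
  proof (rule sum.cong[OF refl])
    fix i assume i: "i \<in> {6..m}"
    have "(\<Sum>p\<in>?fibre i. g (fst p + snd p)) = (\<Sum>p\<in>?fibre i. g i)"
      by (rule sum.cong) auto
    then show "(\<Sum>p\<in>?fibre i. g (fst p + snd p)) = g i * (real i - 5)"
      using card_fibre[OF i] i by (simp add: of_nat_diff)
  qed
  finally show ?thesis .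
qed

theorem mainTheorem2:
  fixes n :: nat
  assumes "6 \<le> n"
  shows "mean_sq_lk n =
           const_q / 16 * (\<Sum>k = 3..n - 3. \<Sum>l = 3..n - k. fact n / fact (n - k - l))
       \<and> mean_sq_lk n =
           const_q / 16 * (\<Sum>i = 6..n. fact n / fact (n - i) * (real i - 5))"
proof
  have "(\<Sum>Pr\<in>disj_cycle_pairs n. real (\<Prod>C\<in>Pr. card C)) = real (card (disj_cyc_list_pairs n)) / 8"
    unfolding card_disj_cyc_list_pairs_eq_sum_prod_card by simp
  then show mean: "mean_sq_lk n =
      const_q / 16 * (\<Sum>k = 3..n - 3. \<Sum>l = 3..n - k. fact n / fact (n - k - l))"
    unfolding mean_sq_lk_eq_sum_prod_card card_disj_cyc_list_pairs_eq_sum_fact by simp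
  have "(\<Sum>k = 3..n - 3. \<Sum>l = 3..n - k. fact n / fact (n - k - l)) =
      (\<Sum>i = 6..n. fact n / fact (n - i) * (real i - 5) :: real)"
    using sum_sum_eq_sum_by_total[of "\<lambda>i. fact n / fact (n - i)" n] by (simp add: diff_diff_left)
  with mean show "mean_sq_lk n = const_q / 16 * (\<Sum>i = 6..n. fact n / fact (n - i) * (real i - 5))"
    by simp
qed

end
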